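(* Let $X$ be a complex vector space equipped with an inner product $\langle\cdot,\cdot\rangle'$. Suppose that for each $\alpha\in(0,1]$ we are given a map $\langle\cdot,\cdot\rangle_\alpha : X\times X\to\mathbb{C}$ and real constants $A_\alpha,B_\alpha$ with $0<A_\alpha\le B_\alpha<\infty$ such that for all $x,y\in X$ and all $\alpha\in(0,1]$, \[ A_\alpha\,|\langle x,y\rangle'| \le |\langle x,y\rangle_\alpha| \le B_\alpha\,|\langle x,y\rangle'|. \] Then for all $x,y,z\in X$, all $k\in\mathbb{C}$ and all $\alpha\in(0,1]$: 1. $\langle x,x\rangle_\alpha=0$ if and only if $x=0$; 2. $\langle 0,y\rangle_\alpha=0$; 3. $\frac{|k|A_\alpha}{B_\alpha}|\langle x,y\rangle_\alpha|\le |\langle kx,y\rangle_\alpha|\le \frac{|k|B_\alpha}{A_\alpha}|\langle x,y\rangle_\alpha|$; 4. $\frac{|k|A_\alpha}{B_\alpha}|\langle x,y\rangle_\alpha|\le |\langle x,ky\rangle_\alpha|\le \frac{|k|B_\alpha}{A_\alpha}|\langle x,y\rangle_\alpha|$; 5. $\frac{|k|A_\alpha}{B_\alpha}|\langle y,x\rangle_\alpha|\le |\langle kx,y\rangle_\alpha|\le \frac{|k|B_\alpha}{A_\alpha}|\langle y,x\rangle_\alpha|$; 6. $\frac{|k|A_\alpha}{B_\alpha}|\langle y,x\rangle_\alpha|\le |\langle x,|k|y\rangle_\alpha|\le \frac{|k|B_\alpha}{A_\alpha}|\langle y,x\rangle_\alpha|$; 7. $\frac{A_\alpha}{B_\alpha}|\langle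 x,ky\rangle_\alpha|\le |\langle kx,y\rangle_\alpha|\le \frac{B_\alpha}{A_\alpha}|\langle x,ky\rangle_\alpha|$; 8. $\frac{A_\alpha}{B_\alpha}|\langle kx,y\rangle_\alpha|\le |\langle x,ky\rangle_\alpha|\le \frac{B_\alpha}{A_\alpha}|\langle kx,y\rangle_\alpha|$; 9. $\frac{A_\alpha}{B_\alpha}|\langle ky,x\rangle_\alpha|\le |\langle kx,y\rangle_\alpha|\le \frac{B_\alpha}{A_\alpha}|\langle ky,x\rangle_\alpha|$; 10. $\frac{A_\alpha}{B_\alpha}|\langle ky,x\rangle_\alpha|\le |\langle x,ky\rangle_\alpha|\le \frac{B_\alpha}{A_\alpha}|\langle ky,x\rangle_\alpha|$; 11. $|\langle kx+z,y\rangle_\alpha|\le \frac{B_\alpha}{A_\alpha}\big(|k|\,|\langle x,y\rangle_\alpha|+|\langle z,y\rangle_\alpha|\big)$; 12. $|\langle x,ky+z\rangle_\alpha|\le \frac{B_\alpha}{A_\alpha}\big(|k|\,|\langle x,y\rangle_\alpha|+|\langle x,z\rangle_\alpha|\big)$.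
   Context: The map $\langle\cdot,\cdot\rangle_\alpha$ satisfying the two-sided bound is the paper's (simplified) "fuzzy inner product" relative to the classical inner product $\langle\cdot,\cdot\rangle'$. *)

theory Defs
  imports "HOL-Analysis.Analysis"
begin

text \<open>A complex vector space is given by an additive abelian group 'a together with a
  complex scalar multiplication sc satisfying the vector space axioms (library locale
  vector_space).\<close>

definition complex_inner_product ::
  "(complex \<Rightarrow> 'a::ab_group_add \<Rightarrow> 'a) \<Rightarrow> ('a \<Rightarrow> 'a \<Rightarrow> complex) \<Rightarrow> bool" where
  "complex_inner_product sc ip \<longleftrightarrow>
     (\<forall>x y. ip y x = cnj (ip x y)) \<and>
     (\<forall>x y z. ip (x + y) z = ip x z + ip y z) \<and>
     (\<forall>c x y. ip (sc c x) y = c * ip x y) \<and>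
     (\<forall>x. Im (ip x x) = 0 \<and> Re (ip x x) \<ge> 0) \<and>
     (\<forall>x. ip x x = 0 \<longleftrightarrow> x = 0)"

end

theory Submission
  imports Defs
begin

(* Each fuzzy value |<u,v>_alpha| lies between A_alpha and B_alpha times the classical
   |<u,v>'|, and the classical inner product obeys exact rules: |<kx,y>'| = |<x,ky>'| =
   |k| |<x,y>'|, |<y,x>'| = |<x,y>'|, and the triangle inequality.  Passing from a fuzzy
   value to its classical counterpart, applying the exact rule, and passing back costs at
   most a factor B_alpha/A_alpha in each direction. *)

locale complex_inner_product_space =
  fixes sc :: "complex \<Rightarrow> 'a::ab_group_add \<Rightarrow> 'a"
    and ip :: "'a \<Rightarrow> 'a \<Rightarrow> complex"
  assumes complex_inner_product: "complex_inner_product sc ip"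
begin

lemma ip_commute: "ip x y = cnj (ip y x)"
  using complex_inner_product unfolding complex_inner_product_def by blast

lemma ip_add_left: "ip (x + y) z = ip x z + ip y z"
  using complex_inner_product unfolding complex_inner_product_def by blast

lemma ip_scale_left: "ip (sc c x) y = c * ip x y"
  using complex_inner_product unfolding complex_inner_product_def by blast

lemma ip_self_eq_0_iff: "ip x x = 0 \<longleftrightarrow> x = 0"
  using complex_inner_product unfolding complex_inner_product_def by blast

lemma ip_add_right: "ip x (y + z) = ip x y + ip x z"
  by (simp only: ip_commute[of x "y + z"] ip_add_left complex_cnj_add
      ip_commute[of x y, symmetric] ip_commute[of x z, symmetric])

lemma ip_scale_right: "ip x (sc c y) = cnj c * ip x y"
  by (simp only: ip_commute[of x "sc c y"] ip_scale_left complex_cnj_mult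
      ip_commute[of x y, symmetric])

lemma ip_zero_left: "ip 0 y = 0"
  using ip_add_left[of 0 0 y] by simp

lemma norm_ip_commute: "cmod (ip x y) = cmod (ip y x)"
  by (simp add: ip_commute[of x y])

lemma norm_ip_scale_left: "cmod (ip (sc c x) y) = cmod c * cmod (ip x y)"
  by (simp add: ip_scale_left norm_mult)

lemma norm_ip_scale_right: "cmod (ip x (sc c y)) = cmod c * cmod (ip x y)"
  by (simp add: ip_scale_right norm_mult)

end

locale fuzzy_inner_product = complex_inner_product_space sc ip
  for sc :: "complex \<Rightarrow> 'a::ab_group_add \<Rightarrow> 'a" and ip +
  fixes fip :: "'a \<Rightarrow> 'a \<Rightarrow> complex"
    and A B :: real
  assumes A_pos: "0 < A"
    and A_le_B: "A \<le> B"
    and norm_fip_lower: "A * cmod (ip x y) \<le> cmod (fip x y)"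
    and norm_fip_upper: "cmod (fip x y) \<le> B * cmod (ip x y)"
begin

lemma B_pos: "0 < B"
  using A_pos A_le_B by linarith

lemma norm_ip_le_norm_fip: "cmod (ip x y) \<le> cmod (fip x y) / A"
  using norm_fip_lower[of x y] A_pos by (simp add: pos_le_divide_eq mult.commute)

lemma fip_eq_0_iff: "fip x y = 0 \<longleftrightarrow> ip x y = 0"
proof
  assume "fip x y = 0"
  then have "A * cmod (ip x y) \<le> 0"
    using norm_fip_lower[of x y] by simp
  then show "ip x y = 0"
    using A_pos by (simp add: mult_le_0_iff)
next
  assume "ip x y = 0"
  then show "fip x y = 0"
    using norm_fip_upper[of x y] by simp
qed

lemma fip_self_eq_0_iff: "fip x x = 0 \<longleftrightarrow> x = 0"
  by (simp add: fip_eq_0_iff ip_self_eq_0_iff)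

lemma fip_zero_left: "fip 0 y = 0"
  by (simp add: fip_eq_0_iff ip_zero_left)

lemma norm_fip_scaled_bounds:
  assumes scaled: "cmod (ip u' v') = c * cmod (ip u v)" and "0 \<le> c"
  shows "c * A / B * cmod (fip u v) \<le> cmod (fip u' v') \<and>
    cmod (fip u' v') \<le> c * B / A * cmod (fip u v)"
proof
  have "c * A / B * cmod (fip u v) \<le> c * A / B * (B * cmod (ip u v))"
    using norm_fip_upper \<open>0 \<le> c\<close> A_pos B_pos by (intro mult_left_mono) auto
  also have "\<dots> = A * cmod (ip u' v')"
    using scaled B_pos by simp
  also have "\<dots> \<le> cmod (fip u' v')"
    by (rule norm_fip_lower)
  finally show "c * A / B * cmod (fip u v) \<le> cmod (fip u' v')" .
next
  have "cmod (fip u' v') \<le> B * cmod (ip u' v')"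
    by (rule norm_fip_upper)
  also have "\<dots> = c * B / A * (A * cmod (ip u v))"
    using scaled A_pos by simp
  also have "\<dots> \<le> c * B / A * cmod (fip u v)"
    using norm_fip_lower \<open>0 \<le> c\<close> A_pos B_pos by (intro mult_left_mono) auto
  finally show "cmod (fip u' v') \<le> c * B / A * cmod (fip u v)" .
qed

lemma norm_fip_bounds:
  assumes "cmod (ip u' v') = cmod (ip u v)"
  shows "A / B * cmod (fip u v) \<le> cmod (fip u' v') \<and>
    cmod (fip u' v') \<le> B / A * cmod (fip u v)"
  using norm_fip_scaled_bounds[of u' v' 1 u v] assms by simp

lemma norm_fip_scale_left_bounds:
  "cmod k * A / B * cmod (fip x y) \<le> cmod (fip (sc k x) y) \<and>
    cmod (fip (sc k x) y) \<le> cmod k * B / A * cmod (fip x y)"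
  by (rule norm_fip_scaled_bounds) (simp_all add: norm_ip_scale_left)

lemma norm_fip_scale_right_bounds:
  "cmod k * A / B * cmod (fip x y) \<le> cmod (fip x (sc k y)) \<and>
    cmod (fip x (sc k y)) \<le> cmod k * B / A * cmod (fip x y)"
  by (rule norm_fip_scaled_bounds) (simp_all add: norm_ip_scale_right)

lemma norm_fip_scale_left_commute_bounds:
  "cmod k * A / B * cmod (fip y x) \<le> cmod (fip (sc k x) y) \<and>
    cmod (fip (sc k x) y) \<le> cmod k * B / A * cmod (fip y x)"
  by (rule norm_fip_scaled_bounds) (simp_all add: norm_ip_scale_left norm_ip_commute[of x y])

lemma norm_fip_scale_norm_right_commute_bounds:
  "cmod k * A / B * cmod (fip y x) \<le> cmod (fip x (sc (of_real (cmod k)) y)) \<and>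
    cmod (fip x (sc (of_real (cmod k)) y)) \<le> cmod k * B / A * cmod (fip y x)"
  by (rule norm_fip_scaled_bounds) (simp_all add: norm_ip_scale_right norm_ip_commute[of x y])

lemma norm_fip_scale_left_right_bounds:
  "A / B * cmod (fip x (sc k y)) \<le> cmod (fip (sc k x) y) \<and>
    cmod (fip (sc k x) y) \<le> B / A * cmod (fip x (sc k y))"
  "A / B * cmod (fip (sc k x) y) \<le> cmod (fip x (sc k y)) \<and>
    cmod (fip x (sc k y)) \<le> B / A * cmod (fip (sc k x) y)"
  by (rule norm_fip_bounds, simp add: norm_ip_scale_left norm_ip_scale_right)+

lemma norm_fip_scale_swap_bounds:
  "A / B * cmod (fip (sc k y) x) \<le> cmod (fip (sc k x) y) \<and>
    cmod (fip (sc k x) y) \<le> B / A * cmod (fip (sc k y) x)"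
  "A / B * cmod (fip (sc k y) x) \<le> cmod (fip x (sc k y)) \<and>
    cmod (fip x (sc k y)) \<le> B / A * cmod (fip (sc k y) x)"
  by (rule norm_fip_bounds,
      simp add: norm_ip_scale_left norm_ip_scale_right norm_ip_commute[of x y])+

lemma norm_fip_scale_add_left_le:
  "cmod (fip (sc k x + z) y) \<le> B / A * (cmod k * cmod (fip x y) + cmod (fip z y))"
proof -
  have "cmod (fip (sc k x + z) y) \<le> B * cmod (ip (sc k x + z) y)"
    by (rule norm_fip_upper)
  also have "\<dots> \<le> B * (cmod k * cmod (ip x y) + cmod (ip z y))"
    using B_pos norm_triangle_ineq[of "ip (sc k x) y" "ip z y"]
    by (simp add: ip_add_left norm_ip_scale_left)
  also have "\<dots> \<le> B * (cmod k * (cmod (fip x y) / A) + cmod (fip z y) / A)"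
    using B_pos norm_ip_le_norm_fip by (intro mult_left_mono add_mono) auto
  also have "\<dots> = B / A * (cmod k * cmod (fip x y) + cmod (fip z y))"
    using A_pos by (simp add: field_simps)
  finally show ?thesis .
qed

lemma norm_fip_scale_add_right_le:
  "cmod (fip x (sc k y + z)) \<le> B / A * (cmod k * cmod (fip x y) + cmod (fip x z))"
proof -
  have "cmod (fip x (sc k y + z)) \<le> B * cmod (ip x (sc k y + z))"
    by (rule norm_fip_upper)
  also have "\<dots> \<le> B * (cmod k * cmod (ip x y) + cmod (ip x z))"
    using B_pos norm_triangle_ineq[of "ip x (sc k y)" "ip x z"]
    by (simp add: ip_add_right norm_ip_scale_right)
  also have "\<dots> \<le> B * (cmod k * (cmod (fip x y) / A) + cmod (fip x z) / A)"
    using B_pos norm_ip_le_norm_fip by (intro mult_left_mono add_mono) auto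
  also have "\<dots> = B / A * (cmod k * cmod (fip x y) + cmod (fip x z))"
    using A_pos by (simp add: field_simps)
  finally show ?thesis .
qed

end

theorem mainTheorem4:
  fixes sc :: "complex \<Rightarrow> 'a::ab_group_add \<Rightarrow> 'a"
    and ip :: "'a \<Rightarrow> 'a \<Rightarrow> complex"
    and fip :: "real \<Rightarrow> 'a \<Rightarrow> 'a \<Rightarrow> complex"
    and A B :: "real \<Rightarrow> real"
  assumes vs: "Vector_Spaces.vector_space sc"
    and ipc: "complex_inner_product sc ip"
    and AB: "\<And>\<alpha>. \<alpha> \<in> {0<..1} \<Longrightarrow> 0 < A \<alpha> \<and> A \<alpha> \<le> B \<alpha>"
    and bnd: "\<And>\<alpha> x y. \<alpha> \<in> {0<..1} \<Longrightarrow>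
        A \<alpha> * cmod (ip x y) \<le> cmod (fip \<alpha> x y) \<and> cmod (fip \<alpha> x y) \<le> B \<alpha> * cmod (ip x y)"
  shows "\<forall>\<alpha>\<in>{0<..1}. \<forall>x y z. \<forall>k::complex.
    (fip \<alpha> x x = 0 \<longleftrightarrow> x = 0) \<and>
    fip \<alpha> 0 y = 0 \<and>
    (cmod k * A \<alpha> / B \<alpha> * cmod (fip \<alpha> x y) \<le> cmod (fip \<alpha> (sc k x) y) \<and>
       cmod (fip \<alpha> (sc k x) y) \<le> cmod k * B \<alpha> / A \<alpha> * cmod (fip \<alpha> x y)) \<and>
    (cmod k * A \<alpha> / B \<alpha> * cmod (fip \<alpha> x y) \<le> cmod (fip \<alpha> x (sc k y)) \<and>
       cmod (fip \<alpha> x (sc k y)) \<le> cmod k * B \<alpha> / A \<alpha> * cmod (fip \<alpha> x y)) \<and>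
    (cmod k * A \<alpha> / B \<alpha> * cmod (fip \<alpha> y x) \<le> cmod (fip \<alpha> (sc k x) y) \<and>
       cmod (fip \<alpha> (sc k x) y) \<le> cmod k * B \<alpha> / A \<alpha> * cmod (fip \<alpha> y x)) \<and>
    (cmod k * A \<alpha> / B \<alpha> * cmod (fip \<alpha> y x) \<le> cmod (fip \<alpha> x (sc (complex_of_real (cmod k)) y)) \<and>
       cmod (fip \<alpha> x (sc (complex_of_real (cmod k)) y)) \<le> cmod k * B \<alpha> / A \<alpha> * cmod (fip \<alpha> y x)) \<and>
    (A \<alpha> / B \<alpha> * cmod (fip \<alpha> x (sc k y)) \<le> cmod (fip \<alpha> (sc k x) y) \<and>
       cmod (fip \<alpha> (sc k x) y) \<le> B \<alpha> / A \<alpha> * cmod (fip \<alpha> x (sc k y))) \<and>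
    (A \<alpha> / B \<alpha> * cmod (fip \<alpha> (sc k x) y) \<le> cmod (fip \<alpha> x (sc k y)) \<and>
       cmod (fip \<alpha> x (sc k y)) \<le> B \<alpha> / A \<alpha> * cmod (fip \<alpha> (sc k x) y)) \<and>
    (A \<alpha> / B \<alpha> * cmod (fip \<alpha> (sc k y) x) \<le> cmod (fip \<alpha> (sc k x) y) \<and>
       cmod (fip \<alpha> (sc k x) y) \<le> B \<alpha> / A \<alpha> * cmod (fip \<alpha> (sc k y) x)) \<and>
    (A \<alpha> / B \<alpha> * cmod (fip \<alpha> (sc k y) x) \<le> cmod (fip \<alpha> x (sc k y)) \<and>
       cmod (fip \<alpha> x (sc k y)) \<le> B \<alpha> / A \<alpha> * cmod (fip \<alpha> (sc k y) x)) \<and>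
    cmod (fip \<alpha> (sc k x + z) y) \<le> B \<alpha> / A \<alpha> * (cmod k * cmod (fip \<alpha> x y) + cmod (fip \<alpha> z y)) \<and>
    cmod (fip \<alpha> x (sc k y + z)) \<le> B \<alpha> / A \<alpha> * (cmod k * cmod (fip \<alpha> x y) + cmod (fip \<alpha> x z))"
proof -
  have fuzzy: "fuzzy_inner_product sc ip (fip \<alpha>) (A \<alpha>) (B \<alpha>)" if "\<alpha> \<in> {0<..1}" for \<alpha>
    using ipc AB[OF that] bnd[OF that] by unfold_locales auto
  show ?thesis
    using fuzzy_inner_product.fip_self_eq_0_iff[OF fuzzy]
      fuzzy_inner_product.fip_zero_left[OF fuzzy]
      fuzzy_inner_product.norm_fip_scale_left_bounds[OF fuzzy]
      fuzzy_inner_product.norm_fip_scale_right_bounds[OF fuzzy]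
      fuzzy_inner_product.norm_fip_scale_left_commute_bounds[OF fuzzy]
      fuzzy_inner_product.norm_fip_scale_norm_right_commute_bounds[OF fuzzy]
      fuzzy_inner_product.norm_fip_scale_left_right_bounds[OF fuzzy]
      fuzzy_inner_product.norm_fip_scale_swap_bounds[OF fuzzy]
      fuzzy_inner_product.norm_fip_scale_add_left_le[OF fuzzy]
      fuzzy_inner_product.norm_fip_scale_add_right_le[OF fuzzy]
    by simp
qed

end
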